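(* Let $p,q$ be positive integers with $p/q\ge2$, let $G$ be a connected graph with a fixed orientation, and let $f,g$ be two $(p,q)$-colourings of $G$. Then there is a sequence of $(p,q)$-colourings $f=f_0,f_1,\dots,f_n$, each obtained from its predecessor by a vertex set recolouring, such that for some constant $k$ we have $f_n(v)\equiv g(v)+k\pmod p$ for all vertices $v$, if and only if $\varphi_f(C)=\varphi_g(C)$ for every cycle $C$ of $G$.
   Context: A $(p,q)$-colouring of $G$ is a map $f:V(G)\to\{0,\dots,p-1\}$ with $q\le|f(u)-f(v)|\le p-q$ for every edge $uv$. For a fixed orientation $\overrightarrow{G}$, $\varphi_f(e)=f(v)-f(u)\bmod p$ for each arc $e=\overrightarrow{uv}$. For a cycle $C$ with a chosen traversal direction, with $C^+$ the edges oriented along the traversal and $C^-$ the others, $\varphi_f(C)=\sum_{e\in C^+}\varphi_f(e)+\sum_{e\in C^-}(p-\varphi_f(e))$ (in $\mathbb{Z}$). For $\emptyset\ne X\subsetneq V(G)$ let $\partial^+(X)$ (resp. $\partial^-(X)$) be the arcs from $X$ to $V(G)\setminus X$ (resp. from $V(G)\setminus X$ to $X$). A vertex set recolouring of $f$ (recolouring $X$ by $\alpha$), for $\emptyset\neq X\subsetneq V(G)$ and an integer $1\le\alpha\le p-1$ with $\varphi_f(e)\ge q+\alpha$ for all $e\in\partial^+(X)$ and $\varphi_f(e)\le p-q-\alpha$ for all $e\in\partial^-(X)$, produces the colouring $f'$ with $f'(v)=f(v)+\alpha\bmod p$ for $v\in X$ and $f'(v)=f(v)$ otherwise. *)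

theory Defs
  imports Complex_Main "HOL-Number_Theory.Cong"
begin

text \<open>An oriented (simple) graph: finite vertex set V and arc set A.
 Each edge uv of the underlying simple graph is represented by exactly one arc.\<close>
definition oriented_graph :: "'a set \<Rightarrow> ('a \<times> 'a) set \<Rightarrow> bool" where
  "oriented_graph V A \<longleftrightarrow> finite V \<and> A \<subseteq> V \<times> V \<and>
     (\<forall>u v. (u, v) \<in> A \<longrightarrow> u \<noteq> v \<and> (v, u) \<notin> A)"

definition connected_graph :: "'a set \<Rightarrow> ('a \<times> 'a) set \<Rightarrow> bool" where
  "connected_graph V A \<longleftrightarrow> V \<noteq> {} \<and> (\<forall>u\<in>V. \<forall>v\<in>V. (u, v) \<in> (A \<union> A\<inverse>)\<^sup>*)"

definition pq_colouring :: "int \<Rightarrow> int \<Rightarrow> 'a set \<Rightarrow> ('a \<times> 'a) set \<Rightarrow> ('a \<Rightarrow> int) \<Rightarrow> bool" where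
  "pq_colouring p q V A f \<longleftrightarrow> (\<forall>v\<in>V. 0 \<le> f v \<and> f v \<le> p - 1) \<and>
     (\<forall>(u, v)\<in>A. q \<le> \<bar>f u - f v\<bar> \<and> \<bar>f u - f v\<bar> \<le> p - q)"

definition phi_arc :: "int \<Rightarrow> ('a \<Rightarrow> int) \<Rightarrow> 'a \<times> 'a \<Rightarrow> int" where
  "phi_arc p f e = (f (snd e) - f (fst e)) mod p"

definition is_cycle :: "'a set \<Rightarrow> ('a \<times> 'a) set \<Rightarrow> 'a list \<Rightarrow> bool" where
  "is_cycle V A vs \<longleftrightarrow> length vs \<ge> 3 \<and> distinct vs \<and> set vs \<subseteq> V \<and>
     (\<forall>i < length vs. (vs ! i, vs ! ((i + 1) mod length vs)) \<in> A \<union> A\<inverse>)"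

definition phi_cycle :: "int \<Rightarrow> ('a \<times> 'a) set \<Rightarrow> ('a \<Rightarrow> int) \<Rightarrow> 'a list \<Rightarrow> int" where
  "phi_cycle p A f vs = (\<Sum>i<length vs.
     (let x = vs ! i; y = vs ! ((i + 1) mod length vs) in
      if (x, y) \<in> A then phi_arc p f (x, y) else p - phi_arc p f (y, x)))"

definition out_arcs :: "('a \<times> 'a) set \<Rightarrow> 'a set \<Rightarrow> ('a \<times> 'a) set" where
  "out_arcs A X = {(u, v) \<in> A. u \<in> X \<and> v \<notin> X}"

definition in_arcs :: "('a \<times> 'a) set \<Rightarrow> 'a set \<Rightarrow> ('a \<times> 'a) set" where
  "in_arcs A X = {(u, v) \<in> A. u \<notin> X \<and> v \<in> X}"

definition vs_recolouring :: "int \<Rightarrow> int \<Rightarrow> 'a set \<Rightarrow> ('a \<times> 'a) set \<Rightarrow>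
    ('a \<Rightarrow> int) \<Rightarrow> ('a \<Rightarrow> int) \<Rightarrow> bool" where
  "vs_recolouring p q V A f f' \<longleftrightarrow> (\<exists>X \<alpha>. X \<noteq> {} \<and> X \<subset> V \<and> 1 \<le> \<alpha> \<and> \<alpha> \<le> p - 1 \<and>
     (\<forall>e\<in>out_arcs A X. phi_arc p f e \<ge> q + \<alpha>) \<and>
     (\<forall>e\<in>in_arcs A X. phi_arc p f e \<le> p - q - \<alpha>) \<and>
     f' = (\<lambda>v. if v \<in> X then (f v + \<alpha>) mod p else f v))"

end

theory Submission
  imports Defs
begin

text \<open>Taken modulo p, the arc values \<open>\<phi>_f\<close> of a colouring change under a vertex set
  recolouring of X by \<open>\<alpha>\<close> by the coboundary of \<open>\<alpha>\<cdot>1_X\<close>, and not at all under adding a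
  constant. So if f reaches a shift of g, then \<open>\<phi>_g - \<phi>_f\<close> is the coboundary of a potential h,
  equivalently its signed sum vanishes on every cycle (the constants p of backward arcs cancel).
  Conversely, given such an h, recolour by 1 the set where h is maximal: arcs leaving it have
  \<open>\<phi>_f \<ge> \<phi>_g + 1 \<ge> q + 1\<close> and arcs entering it \<open>\<phi>_f \<le> \<phi>_g - 1 \<le> p - q - 1\<close>, so this is a
  legal recolouring, and it lowers h by 1 on that set. Iterating until h is constant yields
  a colouring with the same arc values as g, which on a connected graph is a shift of g.\<close>

abbreviation is_walk :: "('a \<times> 'a) set \<Rightarrow> 'a list \<Rightarrow> bool" where
  "is_walk R \<equiv> successively (\<lambda>x y. (x, y) \<in> R)"

fun walk_sum :: "('a \<Rightarrow> 'a \<Rightarrow> int) \<Rightarrow> 'a list \<Rightarrow> int" where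
  "walk_sum w (x # y # zs) = w x y + walk_sum w (y # zs)"
| "walk_sum w _ = 0"

lemma walk_sum_append: "walk_sum w (xs @ z # ys) = walk_sum w (xs @ [z]) + walk_sum w (z # ys)"
  by (induction xs rule: induct_list012) auto

lemma successively_append_Cons_iff:
  "successively P (xs @ z # ys) \<longleftrightarrow> successively P (xs @ [z]) \<and> successively P (z # ys)"
  by (induction xs rule: induct_list012) auto

lemma walk_sum_conv_nth: "walk_sum w xs = (\<Sum>i<length xs - 1. w (xs ! i) (xs ! Suc i))"
  by (induction w xs rule: walk_sum.induct)
    (auto simp: sum.lessThan_Suc_shift simp del: sum.lessThan_Suc)

lemma walk_sum_closed_conv_nth:
  assumes "ys \<noteq> []"
  shows "walk_sum w (last ys # ys) = (\<Sum>i<length ys. w (ys ! i) (ys ! ((i + 1) mod length ys)))"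
proof -
  obtain m where m: "length ys = Suc m" using assms by (cases ys) auto
  have last: "last ys = ys ! m" using assms m by (simp add: last_conv_nth)
  have "walk_sum w (last ys # ys) = w (last ys) (ys ! 0) + (\<Sum>i<m. w (ys ! i) (ys ! Suc i))"
    using m by (simp add: walk_sum_conv_nth sum.lessThan_Suc_shift del: sum.lessThan_Suc)
  also have "(\<Sum>i<m. w (ys ! i) (ys ! Suc i)) = (\<Sum>i<m. w (ys ! i) (ys ! ((i + 1) mod Suc m)))"
    by (rule sum.cong) auto
  finally show ?thesis using m last by simp
qed

lemma is_walk_closed_conv_nth:
  assumes "ys \<noteq> []"
  shows "is_walk R (last ys # ys) \<longleftrightarrow> (\<forall>i<length ys. (ys ! i, ys ! ((i + 1) mod length ys)) \<in> R)"
proof -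
  obtain m where m: "length ys = Suc m" using assms by (cases ys) auto
  have last: "last ys = ys ! m" using assms m by (simp add: last_conv_nth)
  have "is_walk R (last ys # ys) \<longleftrightarrow>
      (last ys, ys ! 0) \<in> R \<and> (\<forall>i<m. (ys ! i, ys ! Suc i) \<in> R)"
    unfolding successively_conv_nth using m by (simp add: All_less_Suc2[where n = m, simplified])
  moreover have "(\<forall>i<Suc m. (ys ! i, ys ! ((i + 1) mod Suc m)) \<in> R) \<longleftrightarrow>
      (ys ! m, ys ! 0) \<in> R \<and> (\<forall>i<m. (ys ! i, ys ! Suc i) \<in> R)"
    by (simp add: All_less_Suc)
  ultimately show ?thesis using m last by auto
qed

lemma closed_distinct_walk_sum_eq_0:
  assumes antisym: "\<And>x y. (x, y) \<in> R \<Longrightarrow> w y x = - w x y"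
    and irrefl: "\<And>x. (x, x) \<notin> R"
    and cycles: "\<And>C. 3 \<le> length C \<Longrightarrow> distinct C \<Longrightarrow> set C \<subseteq> V \<Longrightarrow>
       \<forall>i<length C. (C ! i, C ! ((i + 1) mod length C)) \<in> R \<Longrightarrow>
       (\<Sum>i<length C. w (C ! i) (C ! ((i + 1) mod length C))) = 0"
    and ys: "ys \<noteq> []" "distinct ys" "set ys \<subseteq> V" "is_walk R (last ys # ys)"
  shows "walk_sum w (last ys # ys) = 0"
proof -
  have "0 < length ys" using ys(1) by simp
  then consider "length ys = 1" | "length ys = 2" | "3 \<le> length ys" by linarith
  then show ?thesis
  proof cases
    case 1
    then obtain x where "ys = [x]" by (auto simp: length_Suc_conv)
    then show ?thesis using ys(4) irrefl by simp
  next
    case 2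
    then obtain x y where "ys = [y, x]" by (auto simp: length_Suc_conv numeral_2_eq_2)
    then show ?thesis using ys(4) antisym[of x y] by simp
  next
    case 3
    have "\<forall>i<length ys. (ys ! i, ys ! ((i + 1) mod length ys)) \<in> R"
      using ys(4) is_walk_closed_conv_nth[OF ys(1)] by blast
    then show ?thesis
      using cycles[OF 3 ys(2,3)] walk_sum_closed_conv_nth[OF ys(1)] by simp
  qed
qed

text \<open>A closed walk that repeats a vertex splits into two shorter closed walks.\<close>
lemma closed_walk_sum_eq_0:
  assumes antisym: "\<And>x y. (x, y) \<in> R \<Longrightarrow> w y x = - w x y"
    and irrefl: "\<And>x. (x, x) \<notin> R"
    and cycles: "\<And>C. 3 \<le> length C \<Longrightarrow> distinct C \<Longrightarrow> set C \<subseteq> V \<Longrightarrow>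
       \<forall>i<length C. (C ! i, C ! ((i + 1) mod length C)) \<in> R \<Longrightarrow>
       (\<Sum>i<length C. w (C ! i) (C ! ((i + 1) mod length C))) = 0"
  shows "is_walk R xs \<Longrightarrow> set xs \<subseteq> V \<Longrightarrow> xs \<noteq> [] \<Longrightarrow> hd xs = last xs \<Longrightarrow> walk_sum w xs = 0"
proof (induction "length xs" arbitrary: xs rule: less_induct)
  case less
  show ?case
  proof (cases "tl xs = []")
    case True
    then show ?thesis by (cases xs) auto
  next
    case nontrivial: False
    define ys where "ys = tl xs"
    have "ys \<noteq> []" using nontrivial unfolding ys_def .
    have xs: "xs = last ys # ys"
      using less.prems(3,4) nontrivial unfolding ys_def by (cases xs) auto
    show ?thesis
    proof (cases "distinct ys")
      case True
      have "set ys \<subseteq> V" "is_walk R (last ys # ys)"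
        using less.prems(1,2) unfolding xs by auto
      then have "walk_sum w (last ys # ys) = 0"
        using closed_distinct_walk_sum_eq_0[OF antisym irrefl cycles] True \<open>ys \<noteq> []\<close> by blast
      then show ?thesis unfolding xs .
    next
      case False
      then obtain a z b c where ys: "ys = a @ [z] @ b @ [z] @ c"
        using not_distinct_decomp by blast
      define x where "x = last ys"
      have x: "x = last (z # c)" unfolding x_def ys by simp
      have xs': "xs = (x # a) @ z # b @ z # c" using xs unfolding x_def ys by simp
      have walks: "is_walk R ((x # a) @ z # c)" "is_walk R ((z # b) @ [z])"
        using less.prems(1) successively_append_Cons_iff[of _ "x # a" z "b @ z # c"]
          successively_append_Cons_iff[of _ "z # b" z c] successively_append_Cons_iff[of _ "x # a" z c]
        unfolding xs' by simp_all
      have "walk_sum w ((x # a) @ z # c) = 0"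
      proof (rule less.hyps)
        show "length ((x # a) @ z # c) < length xs" unfolding xs' by simp
        show "set ((x # a) @ z # c) \<subseteq> V" using less.prems(2) unfolding xs' by auto
      qed (use walks x in simp_all)
      moreover have "walk_sum w ((z # b) @ [z]) = 0"
      proof (rule less.hyps)
        show "length ((z # b) @ [z]) < length xs" unfolding xs' by simp
        show "set ((z # b) @ [z]) \<subseteq> V" using less.prems(2) unfolding xs' by auto
      qed (use walks in simp_all)
      ultimately show ?thesis
        using walk_sum_append[of w "x # a" z "b @ z # c"] walk_sum_append[of w "z # b" z c]
          walk_sum_append[of w "x # a" z c]
        unfolding xs' by simp
    qed
  qed
qed

lemma walk_if_rtrancl:
  assumes "(x, y) \<in> R\<^sup>*" and "y \<in> V" and "R \<subseteq> V \<times> V"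
  shows "\<exists>xs. xs \<noteq> [] \<and> hd xs = x \<and> last xs = y \<and> is_walk R xs \<and> set xs \<subseteq> V"
  using assms(1)
proof (induction rule: converse_rtrancl_induct)
  case base
  show ?case using assms(2) by (intro exI[of _ "[y]"]) auto
next
  case (step u z)
  then obtain xs where xs: "xs \<noteq> []" "hd xs = z" "last xs = y" "is_walk R xs" "set xs \<subseteq> V"
    by blast
  moreover have "u \<in> V" using step(1) assms(3) by auto
  ultimately show ?case using step(1)
    by (intro exI[of _ "u # xs"]) (auto simp: successively_Cons)
qed

lemma walk_sum_eq_neg_closing_walk:
  assumes closed: "\<And>xs. is_walk R xs \<Longrightarrow> set xs \<subseteq> V \<Longrightarrow> xs \<noteq> [] \<Longrightarrow> hd xs = last xs \<Longrightarrow>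
      walk_sum w xs = 0"
    and xs: "is_walk R xs" "set xs \<subseteq> V" "xs \<noteq> []"
    and ys: "is_walk R ys" "set ys \<subseteq> V" "ys \<noteq> []"
    and ends: "last xs = hd ys" "last ys = hd xs"
  shows "walk_sum w xs = - walk_sum w ys"
proof -
  define v where "v = hd ys"
  define xs' where "xs' = butlast xs"
  define zs where "zs = tl ys"
  have xs': "xs = xs' @ [v]"
    using append_butlast_last_id[OF xs(3)] ends(1) unfolding xs'_def v_def by simp
  have zs: "ys = v # zs" using ys(3) unfolding v_def zs_def by simp
  have "walk_sum w (xs' @ v # zs) = 0"
  proof (rule closed)
    show "is_walk R (xs' @ v # zs)"
      using xs(1) ys(1) successively_append_Cons_iff[of _ xs' v zs] unfolding xs' zs by simp
    show "set (xs' @ v # zs) \<subseteq> V" using xs(2) ys(2) unfolding xs' zs by auto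
    show "hd (xs' @ v # zs) = last (xs' @ v # zs)"
      using ends(2) unfolding xs' zs by (cases xs') auto
  qed simp
  then show ?thesis using walk_sum_append[of w xs' v zs] unfolding xs' zs by simp
qed

text \<open>The potential of v is the weight of a walk from a fixed root r to v; the choice of walk
  does not matter, as closing it with a fixed walk from v back to r gives weight zero.\<close>
lemma potential_if_closed_walk_sums_eq_0:
  assumes "R \<subseteq> V \<times> V" and "r \<in> V" and conn: "\<forall>v\<in>V. (r, v) \<in> R\<^sup>* \<and> (v, r) \<in> R\<^sup>*"
    and closed: "\<And>xs. is_walk R xs \<Longrightarrow> set xs \<subseteq> V \<Longrightarrow> xs \<noteq> [] \<Longrightarrow> hd xs = last xs \<Longrightarrow>
      walk_sum w xs = 0"
  shows "\<exists>h. \<forall>u v. (u, v) \<in> R \<longrightarrow> w u v = h v - h u"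
proof -
  have "\<exists>P. P \<noteq> [] \<and> hd P = r \<and> last P = v \<and> is_walk R P \<and> set P \<subseteq> V" if "v \<in> V" for v
    using walk_if_rtrancl[OF conn[rule_format, OF that, THEN conjunct1] that assms(1)] .
  then obtain P where P: "\<And>v. v \<in> V \<Longrightarrow>
      P v \<noteq> [] \<and> hd (P v) = r \<and> last (P v) = v \<and> is_walk R (P v) \<and> set (P v) \<subseteq> V"
    by metis
  have "\<exists>Q. Q \<noteq> [] \<and> hd Q = v \<and> last Q = r \<and> is_walk R Q \<and> set Q \<subseteq> V" if "v \<in> V" for v
    using walk_if_rtrancl[OF conn[rule_format, OF that, THEN conjunct2] assms(2,1)] .
  then obtain Q where Q: "\<And>v. v \<in> V \<Longrightarrow>
      Q v \<noteq> [] \<and> hd (Q v) = v \<and> last (Q v) = r \<and> is_walk R (Q v) \<and> set (Q v) \<subseteq> V"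
    by metis
  show ?thesis
  proof (intro exI allI impI)
    fix u v assume uv: "(u, v) \<in> R"
    then have "u \<in> V" "v \<in> V" using assms(1) by auto
    define ys where "ys = butlast (P u)"
    have Pu: "P u = ys @ [u]"
      using P[OF \<open>u \<in> V\<close>] append_butlast_last_id[of "P u"] unfolding ys_def by simp
    have "is_walk R (P u @ [v])"
      using P[OF \<open>u \<in> V\<close>] uv successively_append_Cons_iff[of _ ys u "[v]"] unfolding Pu by simp
    moreover have "set (P u @ [v]) \<subseteq> V" "P u @ [v] \<noteq> []" "hd (P u @ [v]) = r"
      using P[OF \<open>u \<in> V\<close>] \<open>v \<in> V\<close> unfolding Pu by (cases ys; auto)+
    ultimately have "walk_sum w (P u @ [v]) = - walk_sum w (Q v)"
      using Q[OF \<open>v \<in> V\<close>] by (intro walk_sum_eq_neg_closing_walk[OF closed]) auto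
    moreover have "walk_sum w (P v) = - walk_sum w (Q v)"
      using P[OF \<open>v \<in> V\<close>] Q[OF \<open>v \<in> V\<close>] by (intro walk_sum_eq_neg_closing_walk[OF closed]) auto
    moreover have "walk_sum w (P u @ [v]) = walk_sum w (P u) + w u v"
      using walk_sum_append[of w ys u "[v]"] unfolding Pu by simp
    ultimately show "w u v = walk_sum w (P v) - walk_sum w (P u)" by simp
  qed
qed

definition is_potential :: "('a \<times> 'a) set \<Rightarrow> ('a \<times> 'a \<Rightarrow> int) \<Rightarrow> ('a \<Rightarrow> int) \<Rightarrow> bool" where
  "is_potential A w h \<longleftrightarrow> (\<forall>u v. (u, v) \<in> A \<longrightarrow> w (u, v) = h v - h u)"

definition signed_arc_value :: "('a \<times> 'a) set \<Rightarrow> ('a \<times> 'a \<Rightarrow> int) \<Rightarrow> 'a \<Rightarrow> 'a \<Rightarrow> int" where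
  "signed_arc_value A w x y = (if (x, y) \<in> A then w (x, y) else - w (y, x))"

definition cycle_sum :: "('a \<times> 'a) set \<Rightarrow> ('a \<times> 'a \<Rightarrow> int) \<Rightarrow> 'a list \<Rightarrow> int" where
  "cycle_sum A w C = (\<Sum>i<length C. signed_arc_value A w (C ! i) (C ! ((i + 1) mod length C)))"

lemma is_potential_add:
  "is_potential A w h \<Longrightarrow> is_potential A w' h' \<Longrightarrow>
    is_potential A (\<lambda>e. w e + w' e) (\<lambda>v. h v + h' v)"
  unfolding is_potential_def by auto

lemma sum_rotate_mod:
  fixes F :: "nat \<Rightarrow> 'b::comm_monoid_add"
  assumes "0 < n"
  shows "(\<Sum>i<n. F ((i + 1) mod n)) = (\<Sum>i<n. F i)"
proof -
  obtain m where n: "n = Suc m" using assms by (cases n) auto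
  have "(\<Sum>i<Suc m. F ((i + 1) mod Suc m)) = (\<Sum>i<m. F (Suc i)) + F 0"
    by simp
  also have "\<dots> = (\<Sum>i<Suc m. F i)"
    by (simp only: sum.lessThan_Suc_shift add.commute)
  finally show ?thesis using n by simp
qed

lemma cycle_sum_eq_0_if_potential:
  assumes "is_potential A w h" and "is_cycle V A C"
  shows "cycle_sum A w C = 0"
proof -
  let ?n = "length C"
  have "cycle_sum A w C = (\<Sum>i<?n. h (C ! ((i + 1) mod ?n)) - h (C ! i))"
    unfolding cycle_sum_def
  proof (rule sum.cong)
    fix i assume "i \<in> {..<?n}"
    then have "(C ! i, C ! ((i + 1) mod ?n)) \<in> A \<union> A\<inverse>"
      using assms(2) unfolding is_cycle_def by auto
    then show "signed_arc_value A w (C ! i) (C ! ((i + 1) mod ?n)) = h (C ! ((i + 1) mod ?n)) - h (C ! i)"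
      using assms(1) unfolding is_potential_def signed_arc_value_def by auto
  qed simp
  also have "\<dots> = 0"
  proof -
    have "0 < ?n" using assms(2) unfolding is_cycle_def by auto
    then show ?thesis using sum_rotate_mod[of ?n "\<lambda>i. h (C ! i)"] by (simp add: sum_subtractf)
  qed
  finally show ?thesis .
qed

lemma potential_if_cycle_sums_eq_0:
  assumes orient: "oriented_graph V A" and conn: "connected_graph V A"
    and cycles: "\<forall>C. is_cycle V A C \<longrightarrow> cycle_sum A w C = 0"
  shows "\<exists>h. is_potential A w h"
proof -
  let ?R = "A \<union> A\<inverse>"
  have AV: "A \<subseteq> V \<times> V" using orient unfolding oriented_graph_def by auto
  obtain r where r: "r \<in> V" using conn unfolding connected_graph_def by auto
  have "walk_sum (signed_arc_value A w) xs = 0"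
    if "is_walk ?R xs" "set xs \<subseteq> V" "xs \<noteq> []" "hd xs = last xs" for xs
  proof (rule closed_walk_sum_eq_0[OF _ _ _ that])
    show "\<And>x y. (x, y) \<in> ?R \<Longrightarrow> signed_arc_value A w y x = - signed_arc_value A w x y"
      using orient unfolding oriented_graph_def signed_arc_value_def by auto
    show "\<And>x. (x, x) \<notin> ?R"
      using orient unfolding oriented_graph_def by auto
    show "(\<Sum>i<length C. signed_arc_value A w (C ! i) (C ! ((i + 1) mod length C))) = 0"
      if "3 \<le> length C" "distinct C" "set C \<subseteq> V"
        "\<forall>i<length C. (C ! i, C ! ((i + 1) mod length C)) \<in> ?R" for C
      using cycles that unfolding is_cycle_def cycle_sum_def by auto
  qed
  then obtain h where "\<forall>u v. (u, v) \<in> ?R \<longrightarrow> signed_arc_value A w u v = h v - h u"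
    using potential_if_closed_walk_sums_eq_0[of ?R V r] AV r conn
    unfolding connected_graph_def by blast
  then have "is_potential A w h"
    unfolding is_potential_def signed_arc_value_def by auto
  then show ?thesis by blast
qed

abbreviation phi_diff :: "int \<Rightarrow> ('a \<Rightarrow> int) \<Rightarrow> ('a \<Rightarrow> int) \<Rightarrow> 'a \<times> 'a \<Rightarrow> int" where
  "phi_diff p f g e \<equiv> phi_arc p g e - phi_arc p f e"

lemma phi_cycle_diff: "phi_cycle p A g C - phi_cycle p A f C = cycle_sum A (phi_diff p f g) C"
  unfolding phi_cycle_def cycle_sum_def signed_arc_value_def sum_subtractf[symmetric]
  by (rule sum.cong) (auto simp: Let_def)

lemma phi_cycles_eq_iff_potential:
  assumes "oriented_graph V A" and "connected_graph V A"
  shows "(\<forall>C. is_cycle V A C \<longrightarrow> phi_cycle p A f C = phi_cycle p A g C) \<longleftrightarrow>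
    (\<exists>h. is_potential A (phi_diff p f g) h)"
proof
  assume eq: "\<forall>C. is_cycle V A C \<longrightarrow> phi_cycle p A f C = phi_cycle p A g C"
  have "cycle_sum A (phi_diff p f g) C = 0" if "is_cycle V A C" for C
    using eq that phi_cycle_diff[of p A g C f] by simp
  then show "\<exists>h. is_potential A (phi_diff p f g) h"
    using potential_if_cycle_sums_eq_0[OF assms] by blast
next
  assume "\<exists>h. is_potential A (phi_diff p f g) h"
  then obtain h where h: "is_potential A (phi_diff p f g) h" ..
  show "\<forall>C. is_cycle V A C \<longrightarrow> phi_cycle p A f C = phi_cycle p A g C"
  proof (intro allI impI)
    fix C assume "is_cycle V A C"
    then show "phi_cycle p A f C = phi_cycle p A g C"
      using cycle_sum_eq_0_if_potential[OF h] phi_cycle_diff[of p A g C f] by simp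
  qed
qed

lemma abs_diff_bounds_iff_mod_bounds:
  fixes a b p q :: int
  assumes "0 \<le> a" "a < p" "0 \<le> b" "b < p"
  shows "q \<le> \<bar>a - b\<bar> \<and> \<bar>a - b\<bar> \<le> p - q \<longleftrightarrow> q \<le> (b - a) mod p \<and> (b - a) mod p \<le> p - q"
proof (cases "a \<le> b")
  case True
  then have "(b - a) mod p = b - a" using assms by (intro mod_pos_pos_trivial) auto
  then show ?thesis using True by auto
next
  case False
  have "(b - a) mod p = (b - a + p) mod p" by simp
  also have "\<dots> = b - a + p" using assms False by (intro mod_pos_pos_trivial) auto
  finally show ?thesis using False by auto
qed

lemma pq_colouring_iff_phi_arc:
  assumes "A \<subseteq> V \<times> V"
  shows "pq_colouring p q V A f \<longleftrightarrow> (\<forall>v\<in>V. 0 \<le> f v \<and> f v \<le> p - 1) \<and>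
    (\<forall>e\<in>A. q \<le> phi_arc p f e \<and> phi_arc p f e \<le> p - q)"
proof -
  have "q \<le> \<bar>f u - f v\<bar> \<and> \<bar>f u - f v\<bar> \<le> p - q \<longleftrightarrow>
      q \<le> phi_arc p f (u, v) \<and> phi_arc p f (u, v) \<le> p - q"
    if "\<forall>v\<in>V. 0 \<le> f v \<and> f v \<le> p - 1" "(u, v) \<in> A" for u v
  proof -
    have "u \<in> V" "v \<in> V" using that(2) assms by auto
    then show ?thesis
      using abs_diff_bounds_iff_mod_bounds[of "f u" p "f v" q] that(1) unfolding phi_arc_def by auto
  qed
  then show ?thesis unfolding pq_colouring_def by fast
qed

lemma phi_arc_recolour:
  fixes p q \<alpha> :: int
  assumes "0 < p" "0 < q" "0 \<le> \<alpha>"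
    and out: "\<forall>e\<in>out_arcs A X. q + \<alpha> \<le> phi_arc p f e"
    and into: "\<forall>e\<in>in_arcs A X. phi_arc p f e \<le> p - q - \<alpha>"
    and "(u, v) \<in> A"
  shows "phi_arc p (\<lambda>x. if x \<in> X then (f x + \<alpha>) mod p else f x) (u, v) =
    phi_arc p f (u, v) + (if v \<in> X then \<alpha> else 0) - (if u \<in> X then \<alpha> else 0)"
proof -
  define s where "s x = (if x \<in> X then \<alpha> else 0)" for x
  define f' where "f' x = (if x \<in> X then (f x + \<alpha>) mod p else f x)" for x
  have f'_mod: "f' x mod p = (f x + s x) mod p" for x
    unfolding f'_def s_def by simp
  have "phi_arc p f' (u, v) = (f' v mod p - f' u mod p) mod p"
    unfolding phi_arc_def by (simp add: mod_diff_eq)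
  also have "\<dots> = ((f v + s v) - (f u + s u)) mod p"
    unfolding f'_mod by (simp add: mod_diff_eq)
  also have "\<dots> = ((f v - f u) + (s v - s u)) mod p"
    by (simp add: algebra_simps)
  also have "\<dots> = (phi_arc p f (u, v) + (s v - s u)) mod p"
    unfolding phi_arc_def by (simp only: fst_conv snd_conv mod_add_left_eq)
  also have "\<dots> = phi_arc p f (u, v) + (s v - s u)"
  proof (rule mod_pos_pos_trivial)
    have "0 \<le> phi_arc p f (u, v)" "phi_arc p f (u, v) < p"
      using \<open>0 < p\<close> unfolding phi_arc_def by auto
    moreover have "u \<in> X \<Longrightarrow> v \<notin> X \<Longrightarrow> q + \<alpha> \<le> phi_arc p f (u, v)"
      using out \<open>(u, v) \<in> A\<close> unfolding out_arcs_def by auto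
    moreover have "u \<notin> X \<Longrightarrow> v \<in> X \<Longrightarrow> phi_arc p f (u, v) \<le> p - q - \<alpha>"
      using into \<open>(u, v) \<in> A\<close> unfolding in_arcs_def by auto
    ultimately show "0 \<le> phi_arc p f (u, v) + (s v - s u)" "phi_arc p f (u, v) + (s v - s u) < p"
      using \<open>0 < q\<close> \<open>0 \<le> \<alpha>\<close> unfolding s_def by auto
  qed
  finally show ?thesis unfolding f'_def s_def by simp
qed

lemma potential_if_recolouring:
  assumes "0 < p" "0 < q" and "vs_recolouring p q V A f f'"
  shows "\<exists>h. is_potential A (phi_diff p f f') h"
proof -
  obtain X \<alpha> where "1 \<le> \<alpha>" and out: "\<forall>e\<in>out_arcs A X. q + \<alpha> \<le> phi_arc p f e"
      and into: "\<forall>e\<in>in_arcs A X. phi_arc p f e \<le> p - q - \<alpha>"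
      and f': "f' = (\<lambda>x. if x \<in> X then (f x + \<alpha>) mod p else f x)"
    using assms(3) unfolding vs_recolouring_def by blast
  have "is_potential A (phi_diff p f f') (\<lambda>x. if x \<in> X then \<alpha> else 0)"
    unfolding is_potential_def
  proof (intro allI impI)
    fix u v assume "(u, v) \<in> A"
    then show "phi_diff p f f' (u, v) = (if v \<in> X then \<alpha> else 0) - (if u \<in> X then \<alpha> else 0)"
      using phi_arc_recolour[OF assms(1,2) _ out into] \<open>1 \<le> \<alpha>\<close> unfolding f' by simp
  qed
  then show ?thesis by blast
qed

lemma potential_if_recolouring_sequence:
  assumes "0 < p" "0 < q" and "\<forall>i<n. vs_recolouring p q V A (fs i) (fs (Suc i))"
  shows "\<exists>h. is_potential A (phi_diff p (fs 0) (fs n)) h"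
  using assms(3)
proof (induction n)
  case 0
  have "is_potential A (phi_diff p (fs 0) (fs 0)) (\<lambda>_. 0)" unfolding is_potential_def by simp
  then show ?case by blast
next
  case (Suc n)
  obtain h where "is_potential A (phi_diff p (fs 0) (fs n)) h"
    using Suc.IH Suc.prems by auto
  moreover obtain h' where "is_potential A (phi_diff p (fs n) (fs (Suc n))) h'"
    using potential_if_recolouring[OF assms(1,2) Suc.prems[rule_format, of n]] by blast
  ultimately have "is_potential A (phi_diff p (fs 0) (fs (Suc n))) (\<lambda>v. h v + h' v)"
    using is_potential_add by fastforce
  then show ?case by blast
qed

lemma phi_arc_eq_if_cong_shift:
  assumes "[f u = g u + k] (mod p)" and "[f v = g v + k] (mod p)"
  shows "phi_arc p f (u, v) = phi_arc p g (u, v)"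
proof -
  have "[f v - f u = (g v + k) - (g u + k)] (mod p)" using assms by (intro cong_diff)
  then show ?thesis unfolding phi_arc_def cong_def by simp
qed

lemma cong_shift_if_phi_arc_eq:
  assumes conn: "connected_graph V A" and eq: "\<forall>e\<in>A. phi_arc p f e = phi_arc p g e"
  shows "\<exists>k. \<forall>v\<in>V. [f v = g v + k] (mod p)"
proof -
  obtain r where r: "r \<in> V" using conn unfolding connected_graph_def by auto
  have "[f v - g v = f r - g r] (mod p)" if "(r, v) \<in> (A \<union> A\<inverse>)\<^sup>*" for v
    using that
  proof (induction rule: rtrancl_induct)
    case (step y z)
    have "[f z - f y = g z - g y] (mod p)" if "(y, z) \<in> A"
      using eq that unfolding phi_arc_def cong_def by auto
    moreover have "[f y - f z = g y - g z] (mod p)" if "(z, y) \<in> A"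
      using eq that unfolding phi_arc_def cong_def by auto
    ultimately have "[f z - g z = f y - g y] (mod p)"
      using step(2) by (auto simp: cong_iff_dvd_diff dvd_diff_commute algebra_simps)
    then show ?case using step(3) by (rule cong_trans)
  qed simp
  then have "\<forall>v\<in>V. [f v = g v + (f r - g r)] (mod p)"
    using conn r unfolding connected_graph_def by (auto simp: cong_iff_dvd_diff algebra_simps)
  then show ?thesis by blast
qed

lemma pq_colouring_recolour:
  fixes p q \<alpha> :: int
  assumes "0 < p" "0 < q" "0 \<le> \<alpha>" "A \<subseteq> V \<times> V" and f: "pq_colouring p q V A f"
    and out: "\<forall>e\<in>out_arcs A X. q + \<alpha> \<le> phi_arc p f e"
    and into: "\<forall>e\<in>in_arcs A X. phi_arc p f e \<le> p - q - \<alpha>"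
  shows "pq_colouring p q V A (\<lambda>x. if x \<in> X then (f x + \<alpha>) mod p else f x)"
  unfolding pq_colouring_iff_phi_arc[OF \<open>A \<subseteq> V \<times> V\<close>]
proof (intro conjI ballI)
  fix v assume "v \<in> V"
  then show "0 \<le> (if v \<in> X then (f v + \<alpha>) mod p else f v)"
    "(if v \<in> X then (f v + \<alpha>) mod p else f v) \<le> p - 1"
    using f \<open>0 < p\<close> unfolding pq_colouring_def by auto
next
  fix e assume "e \<in> A"
  obtain u v where uv: "e = (u, v)" by fastforce
  have bounds: "q \<le> phi_arc p f (u, v)" "phi_arc p f (u, v) \<le> p - q"
    using f \<open>e \<in> A\<close> pq_colouring_iff_phi_arc[OF \<open>A \<subseteq> V \<times> V\<close>] unfolding uv by blast+
  have "u \<in> X \<Longrightarrow> v \<notin> X \<Longrightarrow> q + \<alpha> \<le> phi_arc p f (u, v)"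
    using out \<open>e \<in> A\<close> unfolding uv out_arcs_def by auto
  moreover have "u \<notin> X \<Longrightarrow> v \<in> X \<Longrightarrow> phi_arc p f (u, v) \<le> p - q - \<alpha>"
    using into \<open>e \<in> A\<close> unfolding uv in_arcs_def by auto
  ultimately show "q \<le> phi_arc p (\<lambda>x. if x \<in> X then (f x + \<alpha>) mod p else f x) e"
    "phi_arc p (\<lambda>x. if x \<in> X then (f x + \<alpha>) mod p else f x) e \<le> p - q"
    unfolding uv phi_arc_recolour[OF assms(1-3) out into \<open>e \<in> A\<close>[unfolded uv]]
    using bounds \<open>0 \<le> \<alpha>\<close> by auto
qed

lemma phi_arc_slack_at_top_level:
  assumes "A \<subseteq> V \<times> V" "finite V" and g: "pq_colouring p q V A g"
    and h: "is_potential A (phi_diff p f g) h"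
  defines "X \<equiv> {v \<in> V. h v = Max (h ` V)}"
  shows "\<forall>e\<in>out_arcs A X. q + 1 \<le> phi_arc p f e"
    and "\<forall>e\<in>in_arcs A X. phi_arc p f e \<le> p - q - 1"
proof -
  have below_max: "h v \<le> Max (h ` V)" if "v \<in> V" for v
    using that \<open>finite V\<close> by auto
  have phi_g: "q \<le> phi_arc p g e \<and> phi_arc p g e \<le> p - q" if "e \<in> A" for e
    using g that pq_colouring_iff_phi_arc[OF \<open>A \<subseteq> V \<times> V\<close>] by blast
  show "\<forall>e\<in>out_arcs A X. q + 1 \<le> phi_arc p f e"
  proof
    fix e assume "e \<in> out_arcs A X"
    then obtain u v where uv: "e = (u, v)" "(u, v) \<in> A" "u \<in> X" "v \<notin> X"
      unfolding out_arcs_def by auto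
    then have "h v < h u" using below_max \<open>A \<subseteq> V \<times> V\<close> unfolding X_def by force
    then show "q + 1 \<le> phi_arc p f e" using h phi_g[of e] uv unfolding is_potential_def by force
  qed
  show "\<forall>e\<in>in_arcs A X. phi_arc p f e \<le> p - q - 1"
  proof
    fix e assume "e \<in> in_arcs A X"
    then obtain u v where uv: "e = (u, v)" "(u, v) \<in> A" "u \<notin> X" "v \<in> X"
      unfolding in_arcs_def by auto
    then have "h u < h v" using below_max \<open>A \<subseteq> V \<times> V\<close> unfolding X_def by force
    then show "phi_arc p f e \<le> p - q - 1" using h phi_g[of e] uv unfolding is_potential_def by force
  qed
qed

lemma recolour_top_level:
  assumes "2 \<le> p" "0 < q" "A \<subseteq> V \<times> V" "finite V"
    and f: "pq_colouring p q V A f" and g: "pq_colouring p q V A g"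
    and h: "is_potential A (phi_diff p f g) h"
    and v0: "v0 \<in> V" "h v0 < Max (h ` V)"
  shows "\<exists>f' h'. vs_recolouring p q V A f f' \<and> pq_colouring p q V A f' \<and>
    is_potential A (phi_diff p f' g) h' \<and>
    (\<forall>v\<in>V. min (h v) (h v0) \<le> h' v \<and> h' v \<le> h v) \<and> (\<exists>v\<in>V. h' v < h v)"
proof -
  define X where "X = {v \<in> V. h v = Max (h ` V)}"
  define f' where "f' = (\<lambda>v. if v \<in> X then (f v + 1) mod p else f v)"
  define h' where "h' = (\<lambda>v. if v \<in> X then h v - 1 else h v)"
  note out = phi_arc_slack_at_top_level(1)[OF assms(3,4) g h, folded X_def]
  note into = phi_arc_slack_at_top_level(2)[OF assms(3,4) g h, folded X_def]
  have "Max (h ` V) \<in> h ` V" using Max_in \<open>finite V\<close> v0(1) by blast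
  then obtain x where x: "x \<in> X" unfolding X_def by auto
  have "v0 \<notin> X" using v0 unfolding X_def by auto
  have "vs_recolouring p q V A f f'"
    unfolding vs_recolouring_def using x \<open>v0 \<notin> X\<close> v0(1) \<open>2 \<le> p\<close> out into
    by (intro exI[of _ X] exI[of _ "1::int"]) (auto simp: X_def f'_def)
  moreover have "pq_colouring p q V A f'"
    unfolding f'_def using pq_colouring_recolour[of p q 1] assms(1-3) f out into by simp
  moreover have "is_potential A (phi_diff p f' g) h'"
    using h phi_arc_recolour[of p q 1 A X f] assms(1,2) out into
    unfolding is_potential_def h'_def f'_def by auto
  moreover have "\<forall>v\<in>V. min (h v) (h v0) \<le> h' v \<and> h' v \<le> h v"
    using v0 unfolding h'_def X_def by auto
  moreover have "\<exists>v\<in>V. h' v < h v"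
    using x unfolding h'_def X_def by auto
  ultimately show ?thesis by blast
qed

definition recolourable_to_shift ::
    "int \<Rightarrow> int \<Rightarrow> 'a set \<Rightarrow> ('a \<times> 'a) set \<Rightarrow> ('a \<Rightarrow> int) \<Rightarrow> ('a \<Rightarrow> int) \<Rightarrow> bool" where
  "recolourable_to_shift p q V A f g \<longleftrightarrow> (\<exists>(n::nat) (fs :: nat \<Rightarrow> 'a \<Rightarrow> int). fs 0 = f \<and>
     (\<forall>i\<le>n. pq_colouring p q V A (fs i)) \<and>
     (\<forall>i<n. vs_recolouring p q V A (fs i) (fs (Suc i))) \<and>
     (\<exists>k::int. \<forall>v\<in>V. [fs n v = g v + k] (mod p)))"

lemma recolourable_to_shiftI:
  "pq_colouring p q V A f \<Longrightarrow> \<forall>v\<in>V. [f v = g v + k] (mod p) \<Longrightarrow> recolourable_to_shift p q V A f g"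
  unfolding recolourable_to_shift_def by (intro exI[of _ "0::nat"] exI[of _ "\<lambda>_. f"]) auto

lemma recolourable_to_shift_step:
  assumes "pq_colouring p q V A f" "vs_recolouring p q V A f f'" "recolourable_to_shift p q V A f' g"
  shows "recolourable_to_shift p q V A f g"
proof -
  obtain n fs k where fs: "fs 0 = f'" "\<forall>i\<le>n. pq_colouring p q V A (fs i)"
      "\<forall>i<n. vs_recolouring p q V A (fs i) (fs (Suc i))" "\<forall>v\<in>V. [fs n v = g v + k] (mod p)"
    using assms(3) unfolding recolourable_to_shift_def by blast
  define gs where "gs = case_nat f fs"
  have "\<forall>i\<le>Suc n. pq_colouring p q V A (gs i)"
  proof (intro allI impI)
    fix i assume "i \<le> Suc n"
    then show "pq_colouring p q V A (gs i)" using fs(2) assms(1) unfolding gs_def by (cases i) auto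
  qed
  moreover have "\<forall>i<Suc n. vs_recolouring p q V A (gs i) (gs (Suc i))"
  proof (intro allI impI)
    fix i assume "i < Suc n"
    then show "vs_recolouring p q V A (gs i) (gs (Suc i))"
      using fs(1,3) assms(2) unfolding gs_def by (cases i) auto
  qed
  moreover have "gs 0 = f" "\<forall>v\<in>V. [gs (Suc n) v = g v + k] (mod p)"
    using fs(4) unfolding gs_def by simp_all
  ultimately show ?thesis unfolding recolourable_to_shift_def by blast
qed

lemma potential_if_recolourable_to_shift:
  assumes "0 < p" "0 < q" "A \<subseteq> V \<times> V" and "recolourable_to_shift p q V A f g"
  shows "\<exists>h. is_potential A (phi_diff p f g) h"
proof -
  obtain n fs k where fs: "fs 0 = f" "\<forall>i<n. vs_recolouring p q V A (fs i) (fs (Suc i))"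
      "\<forall>v\<in>V. [fs n v = g v + k] (mod p)"
    using assms(4) unfolding recolourable_to_shift_def by blast
  obtain h where "is_potential A (phi_diff p f (fs n)) h"
    using potential_if_recolouring_sequence[OF assms(1,2) fs(2)] fs(1) by blast
  moreover have "phi_arc p (fs n) (u, v) = phi_arc p g (u, v)" if "(u, v) \<in> A" for u v
  proof -
    have "u \<in> V" "v \<in> V" using that assms(3) by auto
    then show ?thesis
      by (intro phi_arc_eq_if_cong_shift[where k = k]) (simp_all add: fs(3))
  qed
  ultimately have "is_potential A (phi_diff p f g) h" unfolding is_potential_def by simp
  then show ?thesis by blast
qed

lemma recolourable_to_shift_if_potential:
  assumes "2 \<le> p" "0 < q" and orient: "oriented_graph V A" and conn: "connected_graph V A"
    and g: "pq_colouring p q V A g"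
  shows "pq_colouring p q V A f \<Longrightarrow> is_potential A (phi_diff p f g) h \<Longrightarrow> \<forall>v\<in>V. m \<le> h v \<Longrightarrow>
    recolourable_to_shift p q V A f g"
proof (induction "\<Sum>v\<in>V. nat (h v - m)" arbitrary: f h rule: less_induct)
  case less
  have AV: "A \<subseteq> V \<times> V" and "finite V" using orient unfolding oriented_graph_def by auto
  show ?case
  proof (cases "\<exists>v0\<in>V. h v0 < Max (h ` V)")
    case True
    then obtain v0 where v0: "v0 \<in> V" "h v0 < Max (h ` V)" by blast
    obtain f' h' where f': "vs_recolouring p q V A f f'" "pq_colouring p q V A f'"
        "is_potential A (phi_diff p f' g) h'" "\<forall>v\<in>V. min (h v) (h v0) \<le> h' v \<and> h' v \<le> h v"
        "\<exists>v\<in>V. h' v < h v"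
      using recolour_top_level[OF assms(1,2) AV \<open>finite V\<close> less.prems(1) g less.prems(2) v0] by blast
    have bounded: "\<forall>v\<in>V. m \<le> h' v"
    proof
      fix v assume "v \<in> V"
      then have "m \<le> min (h v) (h v0)" using less.prems(3) v0(1) by simp
      then show "m \<le> h' v" using f'(4) \<open>v \<in> V\<close> by (meson order_trans)
    qed
    have "(\<Sum>v\<in>V. nat (h' v - m)) < (\<Sum>v\<in>V. nat (h v - m))"
    proof (rule sum_strict_mono_ex1[OF \<open>finite V\<close>])
      show "\<forall>v\<in>V. nat (h' v - m) \<le> nat (h v - m)" using f'(4) by auto
      obtain v where "v \<in> V" "h' v < h v" using f'(5) by blast
      then show "\<exists>v\<in>V. nat (h' v - m) < nat (h v - m)" using bounded by (intro bexI[of _ v]) auto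
    qed
    then have "recolourable_to_shift p q V A f' g" using less.hyps f'(2,3) bounded by blast
    then show ?thesis using recolourable_to_shift_step less.prems(1) f'(1) by blast
  next
    case False
    have h_const: "h v = Max (h ` V)" if "v \<in> V" for v
    proof -
      have "h v \<le> Max (h ` V)" using \<open>finite V\<close> that by simp
      moreover have "\<not> h v < Max (h ` V)" using False that by blast
      ultimately show ?thesis by simp
    qed
    have "\<forall>e\<in>A. phi_arc p f e = phi_arc p g e"
    proof
      fix e assume "e \<in> A"
      moreover obtain u v where "e = (u, v)" by fastforce
      ultimately show "phi_arc p f e = phi_arc p g e"
        using less.prems(2) h_const AV unfolding is_potential_def by force
    qed
    then obtain k where "\<forall>v\<in>V. [f v = g v + k] (mod p)"
      using cong_shift_if_phi_arc_eq[OF conn] by blast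
    then show ?thesis using recolourable_to_shiftI less.prems(1) by blast
  qed
qed

lemma recolourable_to_shift_iff_potential:
  assumes "2 \<le> p" "0 < q" "oriented_graph V A" "connected_graph V A"
    and "pq_colouring p q V A f" "pq_colouring p q V A g"
  shows "recolourable_to_shift p q V A f g \<longleftrightarrow> (\<exists>h. is_potential A (phi_diff p f g) h)"
proof
  have "0 < p" "A \<subseteq> V \<times> V" using assms(1,3) unfolding oriented_graph_def by auto
  then show "\<exists>h. is_potential A (phi_diff p f g) h" if "recolourable_to_shift p q V A f g"
    using potential_if_recolourable_to_shift assms(2) that by blast
next
  assume "\<exists>h. is_potential A (phi_diff p f g) h"
  then obtain h where h: "is_potential A (phi_diff p f g) h" ..
  have "finite V" using assms(3) unfolding oriented_graph_def by auto
  then have "\<forall>v\<in>V. Min (h ` V) \<le> h v" by auto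
  then show "recolourable_to_shift p q V A f g"
    using recolourable_to_shift_if_potential[OF assms(1-4,6,5) h] by blast
qed

theorem corollary2p5:
  fixes p q :: int and V :: "'a set" and A :: "('a \<times> 'a) set" and f g :: "'a \<Rightarrow> int"
  assumes "0 < p" and "0 < q" and "real_of_int p / real_of_int q \<ge> 2"
    and "oriented_graph V A" and "connected_graph V A"
    and "pq_colouring p q V A f" and "pq_colouring p q V A g"
  shows "(\<exists>(n::nat) (fs :: nat \<Rightarrow> 'a \<Rightarrow> int). fs 0 = f \<and>
            (\<forall>i\<le>n. pq_colouring p q V A (fs i)) \<and>
            (\<forall>i<n. vs_recolouring p q V A (fs i) (fs (Suc i))) \<and>
            (\<exists>k::int. \<forall>v\<in>V. [fs n v = g v + k] (mod p)))
         \<longleftrightarrow> (\<forall>C. is_cycle V A C \<longrightarrow> phi_cycle p A f C = phi_cycle p A g C)"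
proof -
  have "2 * real_of_int q \<le> real_of_int p" using assms(2,3) by (simp add: le_divide_eq)
  then have "2 \<le> p" using assms(2) by linarith
    \<comment> \<open>the only use of the ratio condition: recolouring by 1 needs \<open>1 \<le> p - 1\<close>\<close>
  then have "recolourable_to_shift p q V A f g \<longleftrightarrow> (\<exists>h. is_potential A (phi_diff p f g) h)"
    by (rule recolourable_to_shift_iff_potential[OF _ assms(2,4-7)])
  also have "\<dots> \<longleftrightarrow> (\<forall>C. is_cycle V A C \<longrightarrow> phi_cycle p A f C = phi_cycle p A g C)"
    by (rule phi_cycles_eq_iff_potential[OF assms(4,5), symmetric])
  finally show ?thesis unfolding recolourable_to_shift_def .
qed

end
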